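(* In any execution of Algorithm $\mathsf{AG}$ (described in the context) with a guild, every process in the maximal guild sends a $\mathrm{DistributeT}$ message.
   Context: System model: a finite set $\mathcal{P}=\{p_1,\dots,p_n\}$ of processes communicating asynchronously over authenticated point-to-point links; every message sent from a correct process to a correct process is eventually delivered. A process that follows its protocol is correct; others (faulty, Byzantine) may behave arbitrarily. $F\subseteq\mathcal{P}$ denotes the (unknown) set of faulty processes of an execution. For $\mathcal{A}\subseteq 2^{\mathcal{P}}$, write $\mathcal{A}^*=\{A' : A'\subseteq A,\ A\in\mathcal{A}\}$. An asymmetric fail-prone system is an array $\mathbb{F}=[\mathcal{F}_1,\dots,\mathcal{F}_n]$ with $\mathcal{F}_i\subseteq 2^{\mathcal{P}}$. An asymmetric Byzantine quorum system for $\mathbb{F}$ is an array $\mathbb{Q}=[\mathcal{Q}_1,\dots,\mathcal{Q}_n]$ with $\mathcal{Q}_i\subseteq 2^{\mathcal{P}}$ (quorums for $p_i$) satisfying: (consistency) for all $i,j$, all $Q_i\in\mathcal{Q}_i$, $Q_j\in\mathcal{Q}_j$, $F_{ij}\in\mathcal{F}_i^*\cap\mathcal{F}_j^*$: $Q_i\cap Q_j\not\subseteq F_{ij}$; (availability) for all $i$ and $F_i\in\mathcal{F}_i$ there is $Q_i\in\mathcal{Q}_i$ with $F_i\cap Q_i=\emptyset$. A kernel for $p_i$ is a set $K\subseteq\mathcal{P}$ intersecting every $Q\in\mathcal{Q}_i$; $\mathcal{K}_i$ is the set of kernels for $p_i$. A correct process $p_i$ is wise if $F\in\mathcal{F}_i^*$.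 A guild is a set $\mathcal{G}$ of wise processes such that every $p_i\in\mathcal{G}$ has some $Q_i\in\mathcal{Q}_i$ with $Q_i\subseteq\mathcal{G}$. An execution with a guild is one in which a nonempty guild exists; the maximal guild $\mathcal{G}_{max}$ is the union of all guilds. Asymmetric reliable broadcast (arb-broadcast / arb-deliver) guarantees, in every execution with a guild: if a correct process arb-broadcasts $m$, every process of $\mathcal{G}_{max}$ eventually arb-delivers $m$; for each sender, all processes of $\mathcal{G}_{max}$ that arb-deliver from it deliver the same message; if some process of $\mathcal{G}_{max}$ arb-delivers a message from a sender, all processes of $\mathcal{G}_{max}$ eventually arb-deliver a message from that sender; a correct process arb-delivers at most one message per sender, and from a correct sender only a message it arb-broadcast. Algorithm $\mathsf{AG}$ (code of $p_i$; each correct process invokes ag-propose$(x_i)$ exactly once; each guarded "upon there being ..." action executes at most once, message handlers once per message). State: sets $S_i,T_i,U_i$ initially empty, boolean $sentT$ initially false. (1) Upon ag-propose$(x_i)$: arb-broadcast $(p_i,x_i)$. (2) Upon arb-delivering $(p_j,x_j)$ from $p_j$: $S_i\gets S_i\cup\{(p_j,x_j)\}$. (3) Upon there being $Q\in\mathcal{Q}_i$ such that for every $p_j\in Q$ some pair $(p_j,\cdot)\in S_i$: send $\langle\mathrm{DistributeS},p_i,S_i\rangle$ to all. (4) For a received $\langle\mathrm{DistributeS},p_j,S_j\rangle$: once $S_j\subseteq S_i$, provided $sentT$ is false at that moment, set $T_i\gets T_i\cup S_j$ and send $\langle\mathrm{Ack},p_i\rangle$ to $p_j$. (5) Upon Ack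 received from every member of some $Q\in\mathcal{Q}_i$: send Ready to all. (6) Upon Ready received from every member of some $Q\in\mathcal{Q}_i$: send Confirm to all. (7) Upon Confirm received from every member of some $K\in\mathcal{K}_i$: send Confirm to all. (8) Upon Confirm received from every member of some $Q\in\mathcal{Q}_i$: send $\langle\mathrm{DistributeT},p_i,T_i\rangle$ to all and set $sentT\gets$ true. (9) For a received $\langle\mathrm{DistributeT},p_j,T_j\rangle$ from $p_j$: once $T_j\subseteq S_i$, set $U_i\gets U_i\cup T_j$. (10) Upon DistributeT received from every member of some $Q\in\mathcal{Q}_i$: ag-deliver$(U_i)$. *)

theory Defs
  imports Main
begin

text \<open>Processes are the elements of a finite type 'p (so P = UNIV).
  FP i is the fail-prone family of p_i, QS i its family of quorums.\<close>

definition star :: "'p set set \<Rightarrow> 'p set set" where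
  "star A = {A'. \<exists>B\<in>A. A' \<subseteq> B}"

definition asym_quorum_system :: "('p \<Rightarrow> 'p set set) \<Rightarrow> ('p \<Rightarrow> 'p set set) \<Rightarrow> bool" where
  "asym_quorum_system FP QS \<longleftrightarrow>
     (\<forall>i j Qi Qj Fij. Qi \<in> QS i \<longrightarrow> Qj \<in> QS j \<longrightarrow> Fij \<in> star (FP i) \<inter> star (FP j)
          \<longrightarrow> \<not> (Qi \<inter> Qj \<subseteq> Fij)) \<and>
     (\<forall>i. \<forall>Fi\<in>FP i. \<exists>Qi\<in>QS i. Fi \<inter> Qi = {})"

definition kernels :: "('p \<Rightarrow> 'p set set) \<Rightarrow> 'p \<Rightarrow> 'p set set" where
  "kernels QS i = {K. \<forall>Q\<in>QS i. K \<inter> Q \<noteq> {}}"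

definition wise :: "('p \<Rightarrow> 'p set set) \<Rightarrow> 'p set \<Rightarrow> 'p \<Rightarrow> bool" where
  "wise FP F i \<longleftrightarrow> i \<notin> F \<and> F \<in> star (FP i)"

definition guild :: "('p \<Rightarrow> 'p set set) \<Rightarrow> ('p \<Rightarrow> 'p set set) \<Rightarrow> 'p set \<Rightarrow> 'p set \<Rightarrow> bool" where
  "guild FP QS F G \<longleftrightarrow> (\<forall>i\<in>G. wise FP F i) \<and> (\<forall>i\<in>G. \<exists>Q\<in>QS i. Q \<subseteq> G)"

definition Gmax :: "('p \<Rightarrow> 'p set set) \<Rightarrow> ('p \<Rightarrow> 'p set set) \<Rightarrow> 'p set \<Rightarrow> 'p set" where
  "Gmax FP QS F = \<Union>{G. guild FP QS F G}"

datatype ('p, 'v) msg =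
    DistributeS 'p "('p \<times> 'v) set"
  | Ack 'p
  | Ready
  | Confirm
  | DistributeT 'p "('p \<times> 'v) set"

datatype gact = G3 | G5 | G6 | G7 | G8 | G10

text \<open>Local actions: guarded actions, and the processing of a pending
  DistributeS message (handler 4) or DistributeT message (handler 9).\<close>
datatype ('p, 'v) act =
    Guard gact
  | HandleS 'p "('p \<times> 'v) set"
  | HandleT 'p "('p \<times> 'v) set"

text \<open>Global events of an execution (interleaving semantics, one event per time step):
  Propose p x: p invokes ag-propose(x) and (action 1) arb-broadcasts (p,x);
  ArbDeliver i j x: p_i arb-delivers (p_j,x) from sender p_j;
  Receive i j m: p_i receives message m from p_j (authenticated sender);
  Act p a: p executes local action a (a no-op unless enabled).\<close>
datatype ('p, 'v) event =
    Propose 'p 'v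
  | ArbDeliver 'p 'p 'v
  | Receive 'p 'p "('p, 'v) msg"
  | Act 'p "('p, 'v) act"

record ('p, 'v) lstate =
  agS :: "('p \<times> 'v) set"
  agT :: "('p \<times> 'v) set"
  agU :: "('p \<times> 'v) set"
  sentT :: bool
  fired :: "gact set"
  pendS :: "('p \<times> ('p \<times> 'v) set) list"
  pendT :: "('p \<times> ('p \<times> 'v) set) list"
  ackfrom :: "'p set"
  readyfrom :: "'p set"
  confirmfrom :: "'p set"
  dtfrom :: "'p set"

definition init_state :: "('p, 'v) lstate" where
  "init_state = \<lparr>agS = {}, agT = {}, agU = {}, sentT = False, fired = {},
     pendS = [], pendT = [], ackfrom = {}, readyfrom = {}, confirmfrom = {}, dtfrom = {}\<rparr>"

fun enabled :: "('p \<Rightarrow> 'p set set) \<Rightarrow> 'p \<Rightarrow> ('p, 'v) act \<Rightarrow> ('p, 'v) lstate \<Rightarrow> bool" where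
  "enabled QS p (Guard G3) s \<longleftrightarrow> G3 \<notin> fired s \<and> (\<exists>Q\<in>QS p. \<forall>j\<in>Q. \<exists>x. (j, x) \<in> agS s)"
| "enabled QS p (Guard G5) s \<longleftrightarrow> G5 \<notin> fired s \<and> (\<exists>Q\<in>QS p. Q \<subseteq> ackfrom s)"
| "enabled QS p (Guard G6) s \<longleftrightarrow> G6 \<notin> fired s \<and> (\<exists>Q\<in>QS p. Q \<subseteq> readyfrom s)"
| "enabled QS p (Guard G7) s \<longleftrightarrow> G7 \<notin> fired s \<and> (\<exists>K\<in>kernels QS p. K \<subseteq> confirmfrom s)"
| "enabled QS p (Guard G8) s \<longleftrightarrow> G8 \<notin> fired s \<and> (\<exists>Q\<in>QS p. Q \<subseteq> confirmfrom s)"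
| "enabled QS p (Guard G10) s \<longleftrightarrow> G10 \<notin> fired s \<and> (\<exists>Q\<in>QS p. Q \<subseteq> dtfrom s)"
| "enabled QS p (HandleS j X) s \<longleftrightarrow> (j, X) \<in> set (pendS s) \<and> X \<subseteq> agS s"
| "enabled QS p (HandleT j X) s \<longleftrightarrow> (j, X) \<in> set (pendT s) \<and> X \<subseteq> agS s"

fun effect :: "('p, 'v) act \<Rightarrow> ('p, 'v) lstate \<Rightarrow> ('p, 'v) lstate" where
  "effect (Guard G8) s = s\<lparr>fired := insert G8 (fired s), sentT := True\<rparr>"
| "effect (Guard g) s = s\<lparr>fired := insert g (fired s)\<rparr>"
| "effect (HandleS j X) s =
     (if sentT s then s\<lparr>pendS := remove1 (j, X) (pendS s)\<rparr>
      else s\<lparr>pendS := remove1 (j, X) (pendS s), agT := agT s \<union> X\<rparr>)"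
| "effect (HandleT j X) s = s\<lparr>pendT := remove1 (j, X) (pendT s), agU := agU s \<union> X\<rparr>"

fun outputs :: "'p \<Rightarrow> ('p, 'v) act \<Rightarrow> ('p, 'v) lstate \<Rightarrow> ('p \<times> ('p, 'v) msg) set" where
  "outputs p (Guard G3) s = {(q, DistributeS p (agS s)) | q. True}"
| "outputs p (Guard G5) s = {(q, Ready) | q. True}"
| "outputs p (Guard G6) s = {(q, Confirm) | q. True}"
| "outputs p (Guard G7) s = {(q, Confirm) | q. True}"
| "outputs p (Guard G8) s = {(q, DistributeT p (agT s)) | q. True}"
| "outputs p (Guard G10) s = {}"
| "outputs p (HandleS j X) s = (if sentT s then {} else {(j, Ack p)})"
| "outputs p (HandleT j X) s = {}"

fun recv_upd :: "'p \<Rightarrow> ('p, 'v) msg \<Rightarrow> ('p, 'v) lstate \<Rightarrow> ('p, 'v) lstate" where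
  "recv_upd j (DistributeS k X) s = s\<lparr>pendS := pendS s @ [(k, X)]\<rparr>"
| "recv_upd j (Ack k) s = s\<lparr>ackfrom := insert j (ackfrom s)\<rparr>"
| "recv_upd j Ready s = s\<lparr>readyfrom := insert j (readyfrom s)\<rparr>"
| "recv_upd j Confirm s = s\<lparr>confirmfrom := insert j (confirmfrom s)\<rparr>"
| "recv_upd j (DistributeT k X) s = s\<lparr>pendT := pendT s @ [(k, X)], dtfrom := insert j (dtfrom s)\<rparr>"

fun step :: "('p \<Rightarrow> 'p set set) \<Rightarrow> 'p \<Rightarrow> ('p, 'v) event \<Rightarrow> ('p, 'v) lstate \<Rightarrow> ('p, 'v) lstate" where
  "step QS p (Propose q x) s = s"
| "step QS p (ArbDeliver i j x) s = (if i = p then s\<lparr>agS := insert (j, x) (agS s)\<rparr> else s)"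
| "step QS p (Receive i j m) s = (if i = p then recv_upd j m s else s)"
| "step QS p (Act q a) s = (if q = p \<and> enabled QS p a s then effect a s else s)"

text \<open>Local state of p before the event at time t.\<close>
primrec lst :: "('p \<Rightarrow> 'p set set) \<Rightarrow> (nat \<Rightarrow> ('p, 'v) event) \<Rightarrow> 'p \<Rightarrow> nat \<Rightarrow> ('p, 'v) lstate" where
  "lst QS ev p 0 = init_state"
| "lst QS ev p (Suc t) = step QS p (ev t) (lst QS ev p t)"

definition sends :: "('p \<Rightarrow> 'p set set) \<Rightarrow> (nat \<Rightarrow> ('p, 'v) event) \<Rightarrow> 'p \<Rightarrow> 'p \<Rightarrow> ('p, 'v) msg \<Rightarrow> nat \<Rightarrow> bool" where
  "sends QS ev p q m t \<longleftrightarrow>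
     (\<exists>a. ev t = Act p a \<and> enabled QS p a (lst QS ev p t) \<and> (q, m) \<in> outputs p a (lst QS ev p t))"

text \<open>An execution of AG with faulty set F: correct processes (not in F) run the
  state machine above (their state is computed from the trace), faulty processes are
  unconstrained.\<close>
definition ag_execution :: "('p \<Rightarrow> 'p set set) \<Rightarrow> ('p \<Rightarrow> 'p set set) \<Rightarrow> 'p set \<Rightarrow> (nat \<Rightarrow> ('p, 'v) event) \<Rightarrow> bool" where
  "ag_execution FP QS F ev \<longleftrightarrow>
     \<comment> \<open>each correct process invokes ag-propose exactly once\<close>
     (\<forall>p. p \<notin> F \<longrightarrow> (\<exists>!t. \<exists>x. ev t = Propose p x)) \<and>
     \<comment> \<open>reliable links between correct processes\<close>
     (\<forall>p q m t. p \<notin> F \<longrightarrow> q \<notin> F \<longrightarrow> sends QS ev p q m t \<longrightarrow> (\<exists>t'>t. ev t' = Receive q p m)) \<and>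
     \<comment> \<open>authenticated links: a message received from a correct process was sent by it\<close>
     (\<forall>p q m t. p \<notin> F \<longrightarrow> q \<notin> F \<longrightarrow> ev t = Receive q p m \<longrightarrow> (\<exists>t'<t. sends QS ev p q m t')) \<and>
     \<comment> \<open>fairness: an enabled local action of a correct process is eventually executed\<close>
     (\<forall>p a t. p \<notin> F \<longrightarrow> enabled QS p a (lst QS ev p t) \<longrightarrow> (\<exists>t'\<ge>t. ev t' = Act p a)) \<and>
     \<comment> \<open>asymmetric reliable broadcast: validity\<close>
     (\<forall>j x t. j \<notin> F \<longrightarrow> ev t = Propose j x \<longrightarrow>
        (\<forall>i\<in>Gmax FP QS F. \<exists>t'. ev t' = ArbDeliver i j x)) \<and>
     \<comment> \<open>consistency\<close>
     (\<forall>i k j x y t t'. i \<in> Gmax FP QS F \<longrightarrow> k \<in> Gmax FP QS F \<longrightarrow>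
        ev t = ArbDeliver i j x \<longrightarrow> ev t' = ArbDeliver k j y \<longrightarrow> x = y) \<and>
     \<comment> \<open>totality\<close>
     (\<forall>i j x t. i \<in> Gmax FP QS F \<longrightarrow> ev t = ArbDeliver i j x \<longrightarrow>
        (\<forall>k\<in>Gmax FP QS F. \<exists>t' y. ev t' = ArbDeliver k j y)) \<and>
     \<comment> \<open>integrity: at most one delivery per sender at a correct process\<close>
     (\<forall>i j x y t t'. i \<notin> F \<longrightarrow> ev t = ArbDeliver i j x \<longrightarrow> ev t' = ArbDeliver i j y \<longrightarrow> t = t') \<and>
     \<comment> \<open>integrity: from a correct sender only a message it arb-broadcast\<close>
     (\<forall>i j x t. i \<notin> F \<longrightarrow> j \<notin> F \<longrightarrow> ev t = ArbDeliver i j x \<longrightarrow> (\<exists>t'. ev t' = Propose j x))"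

end

theory Submission
  imports Defs
begin

text \<open>Split on whether some member j of the maximal guild ever sets sentT, i.e. executes
  rule (8). If it does, j has received Confirm from a quorum Q_j; the faulty set F lies in the
  fail-prone closures of j and of every guild member i, so quorum consistency makes Q_j - F a
  kernel for i, and these correct processes sent Confirm to everybody: i echoes Confirm by
  rule (7). If no guild member ever sets sentT, none ever withholds an Ack. Validity of
  arb-broadcast fills the S-set of each guild member i on a guild quorum, so i sends DistributeS;
  by totality and consistency every guild member eventually holds all of it and acknowledges;
  hence i collects Acks, then every guild member collects Readys from a guild quorum and sends
  Confirm by rule (6). Either way each guild member receives Confirm from a quorum inside the
  guild and executes rule (8).\<close>

lemma fired_effect [simp]:
  "fired (effect a s) = (case a of Guard g \<Rightarrow> insert g (fired s) | _ \<Rightarrow> fired s)"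
  by (cases "(a, s)" rule: effect.cases) auto

lemma sentT_effect [simp]: "sentT (effect a s) \<longleftrightarrow> sentT s \<or> a = Guard G8"
  by (cases "(a, s)" rule: effect.cases) auto

lemma effect_preserves [simp]:
  "agS (effect a s) = agS s" "ackfrom (effect a s) = ackfrom s" "readyfrom (effect a s) = readyfrom s"
  "confirmfrom (effect a s) = confirmfrom s" "dtfrom (effect a s) = dtfrom s"
  by (cases "(a, s)" rule: effect.cases; simp)+

lemma recv_upd_preserves [simp]:
  "agS (recv_upd j m s) = agS s" "fired (recv_upd j m s) = fired s" "sentT (recv_upd j m s) = sentT s"
  by (cases m; simp)+

lemma recv_upd_from [simp]:
  "ackfrom (recv_upd j m s) = (if \<exists>k. m = Ack k then insert j (ackfrom s) else ackfrom s)"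
  "readyfrom (recv_upd j m s) = (if m = Ready then insert j (readyfrom s) else readyfrom s)"
  "confirmfrom (recv_upd j m s) = (if m = Confirm then insert j (confirmfrom s) else confirmfrom s)"
  "dtfrom (recv_upd j m s) = (if \<exists>k X. m = DistributeT k X then insert j (dtfrom s) else dtfrom s)"
  by (cases m; simp)+

lemma step_mono:
  "agS s \<subseteq> agS (step QS p e s)" "ackfrom s \<subseteq> ackfrom (step QS p e s)"
  "readyfrom s \<subseteq> readyfrom (step QS p e s)" "confirmfrom s \<subseteq> confirmfrom (step QS p e s)"
  "dtfrom s \<subseteq> dtfrom (step QS p e s)"
  by (cases e; force split: act.split)+

lemma fired_stepD:
  assumes "g \<in> fired (step QS p e s)" "g \<notin> fired s"
  shows "e = Act p (Guard g) \<and> enabled QS p (Guard g) s"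
  using assms by (cases e) (auto split: if_splits act.splits)

lemma sentT_stepD:
  assumes "sentT (step QS p e s)" "\<not> sentT s"
  shows "e = Act p (Guard G8) \<and> enabled QS p (Guard G8) s"
  using assms by (cases e) (auto split: if_splits)

lemma confirmfrom_stepD:
  assumes "k \<in> confirmfrom (step QS p e s)" "k \<notin> confirmfrom s"
  shows "e = Receive p k Confirm"
  using assms by (cases e) (auto split: if_splits)

lemma agS_stepD:
  assumes "(j, x) \<in> agS (step QS p e s)" "(j, x) \<notin> agS s"
  shows "e = ArbDeliver p j x"
  using assms by (cases e) (auto split: if_splits)

lemma pendS_effect_Guard [simp]: "pendS (effect (Guard g) s) = pendS s"
  by (cases g) auto

lemma pendS_recv_upd: "set (pendS s) \<subseteq> set (pendS (recv_upd j m s))"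
  by (cases m) auto

lemma pendS_stepD:
  assumes "(j, X) \<in> set (pendS s)" "(j, X) \<notin> set (pendS (step QS p e s))"
  shows "e = Act p (HandleS j X) \<and> enabled QS p (HandleS j X) s"
proof (cases e)
  case (Receive i k m)
  then show ?thesis using assms pendS_recv_upd[of s k m] by (auto split: if_splits)
next
  case (Act q a)
  then have en: "q = p \<and> enabled QS p a s"
    using assms by (cases "q = p \<and> enabled QS p a s") auto
  with Act assms(2) have removed: "(j, X) \<notin> set (pendS (effect a s))"
    by simp
  have "a = HandleS j X"
  proof (cases a)
    case (HandleS j' X')
    with removed have "(j, X) \<notin> set (remove1 (j', X') (pendS s))"
      by (simp split: if_splits)
    with assms(1) HandleS show ?thesis
      by (metis in_set_remove1 prod.inject)
  qed (use removed assms(1) in simp_all)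
  with Act en show ?thesis by simp
qed (use assms in \<open>auto split: if_splits\<close>)

lemma agS_step_finite: "finite (agS (step QS p e s)) \<longleftrightarrow> finite (agS s)"
  by (cases e) auto

lemma finite_agS_lst: "finite (agS (lst QS ev p t))"
  by (induction t) (simp_all add: init_state_def agS_step_finite)

lemma mono_lst:
  "mono (\<lambda>t. agS (lst QS ev p t))" "mono (\<lambda>t. ackfrom (lst QS ev p t))"
  "mono (\<lambda>t. readyfrom (lst QS ev p t))" "mono (\<lambda>t. confirmfrom (lst QS ev p t))"
  "mono (\<lambda>t. dtfrom (lst QS ev p t))"
  by (simp_all add: mono_iff_le_Suc step_mono)

lemma exists_transition:
  fixes P :: "nat \<Rightarrow> bool"
  assumes "\<not> P a" "P b" "a \<le> b"
  shows "\<exists>t. a \<le> t \<and> t < b \<and> \<not> P t \<and> P (Suc t)"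
  using assms
proof (induction b)
  case (Suc b)
  then show ?case by (cases "P b") (auto simp: le_Suc_eq intro: less_SucI)
qed simp

definition executes :: "('p \<Rightarrow> 'p set set) \<Rightarrow> (nat \<Rightarrow> ('p, 'v) event) \<Rightarrow> 'p \<Rightarrow> ('p, 'v) act \<Rightarrow> nat \<Rightarrow> bool" where
  "executes QS ev p a t \<longleftrightarrow> ev t = Act p a \<and> enabled QS p a (lst QS ev p t)"

lemma fired_lst_executed:
  assumes "g \<in> fired (lst QS ev p t)"
  shows "\<exists>t'<t. executes QS ev p (Guard g) t'"
proof -
  obtain t' where "t' < t" "g \<notin> fired (lst QS ev p t')" "g \<in> fired (lst QS ev p (Suc t'))"
    using exists_transition[of "\<lambda>t. g \<in> fired (lst QS ev p t)" 0 t] assms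
    by (auto simp: init_state_def)
  then show ?thesis using fired_stepD[of g QS p "ev t'"] by (auto simp: executes_def)
qed

lemma sentT_lst_executed_G8:
  assumes "sentT (lst QS ev p t)"
  shows "\<exists>t'<t. executes QS ev p (Guard G8) t'"
proof -
  obtain t' where "t' < t" "\<not> sentT (lst QS ev p t')" "sentT (lst QS ev p (Suc t'))"
    using exists_transition[of "\<lambda>t. sentT (lst QS ev p t)" 0 t] assms
    by (auto simp: init_state_def)
  then show ?thesis using sentT_stepD[of QS p "ev t'"] by (auto simp: executes_def)
qed

lemma confirmfrom_lst_received:
  assumes "k \<in> confirmfrom (lst QS ev p t)"
  shows "\<exists>t'<t. ev t' = Receive p k Confirm"
proof -
  obtain t' where "t' < t" "k \<notin> confirmfrom (lst QS ev p t')" "k \<in> confirmfrom (lst QS ev p (Suc t'))"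
    using exists_transition[of "\<lambda>t. k \<in> confirmfrom (lst QS ev p t)" 0 t] assms
    by (auto simp: init_state_def)
  then show ?thesis using confirmfrom_stepD[of k QS p "ev t'"] by auto
qed

lemma agS_lst_delivered:
  assumes "(j, x) \<in> agS (lst QS ev p t)"
  shows "\<exists>t'<t. ev t' = ArbDeliver p j x"
proof -
  obtain t' where "t' < t" "(j, x) \<notin> agS (lst QS ev p t')" "(j, x) \<in> agS (lst QS ev p (Suc t'))"
    using exists_transition[of "\<lambda>t. (j, x) \<in> agS (lst QS ev p t)" 0 t] assms
    by (auto simp: init_state_def)
  then show ?thesis using agS_stepD[of j x QS p "ev t'"] by auto
qed

lemma pendS_lst_removed:
  assumes "(j, X) \<in> set (pendS (lst QS ev p a))" "(j, X) \<notin> set (pendS (lst QS ev p b))" "a \<le> b"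
  shows "\<exists>t. executes QS ev p (HandleS j X) t"
proof -
  obtain t where "(j, X) \<in> set (pendS (lst QS ev p t))" "(j, X) \<notin> set (pendS (lst QS ev p (Suc t)))"
    using exists_transition[of "\<lambda>t. (j, X) \<notin> set (pendS (lst QS ev p t))" a b] assms
    by auto
  then show ?thesis using pendS_stepD[of j X _ QS p "ev t"] by (auto simp: executes_def)
qed

lemma enabled_Guard_persists:
  assumes "enabled QS p (Guard g) (lst QS ev p t)" "t \<le> t'" "g \<notin> fired (lst QS ev p t')"
  shows "enabled QS p (Guard g) (lst QS ev p t')"
proof -
  note grow = mono_lst[of QS ev p, THEN monoD, OF assms(2)]
  show ?thesis
  proof (cases g)
    case G3
    with assms(1) obtain Q where "Q \<in> QS p" "\<forall>j\<in>Q. \<exists>x. (j, x) \<in> agS (lst QS ev p t)"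
      by auto
    with G3 assms(3) grow(1) show ?thesis by simp (meson subsetD)
  next
    case G5 then show ?thesis using assms(1,3) grow(2) by auto
  next
    case G6 then show ?thesis using assms(1,3) grow(3) by auto
  next
    case G7 then show ?thesis using assms(1,3) grow(4) by auto
  next
    case G8 then show ?thesis using assms(1,3) grow(4) by auto
  next
    case G10 then show ?thesis using assms(1,3) grow(5) by auto
  qed
qed

lemma executes_sends:
  "executes QS ev p a t \<Longrightarrow> (q, m) \<in> outputs p a (lst QS ev p t) \<Longrightarrow> sends QS ev p q m t"
  unfolding sends_def executes_def by blast

lemma Confirm_sent_to_all:
  assumes "sends QS ev p j Confirm t"
  shows "sends QS ev p q Confirm t"
proof -
  obtain a where a: "executes QS ev p a t" "(j, Confirm) \<in> outputs p a (lst QS ev p t)"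
    using assms unfolding sends_def executes_def by blast
  then have "(q, Confirm) \<in> outputs p a (lst QS ev p t)"
  proof (cases a)
    case (Guard g)
    then show ?thesis using a(2) by (cases g) auto
  qed (use a(2) in \<open>auto split: if_splits\<close>)
  with a(1) show ?thesis by (rule executes_sends)
qed

lemma mono_eventually_subset:
  fixes f :: "nat \<Rightarrow> 'a set"
  assumes "mono f" "finite K" "\<forall>k\<in>K. \<exists>t. k \<in> f t"
  shows "\<exists>t. K \<subseteq> f t"
proof -
  obtain \<tau> where \<tau>: "\<forall>k\<in>K. k \<in> f (\<tau> k)"
    using assms(3) by metis
  have "k \<in> f (Max (\<tau> ` K))" if "k \<in> K" for k
    using \<tau> that monoD[OF assms(1) Max_ge[OF finite_imageI[OF assms(2)] imageI[OF that]]] by blast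
  then show ?thesis by blast
qed

lemma guild_Gmax: "guild FP QS F (Gmax FP QS F)"
proof -
  have "wise FP F i \<and> (\<exists>Q\<in>QS i. Q \<subseteq> Gmax FP QS F)" if "i \<in> Gmax FP QS F" for i
  proof -
    from that obtain G where G: "guild FP QS F G" "i \<in> G"
      by (auto simp: Gmax_def)
    then have "G \<subseteq> Gmax FP QS F"
      by (auto simp: Gmax_def)
    with G show ?thesis
      unfolding guild_def by (meson order_trans)
  qed
  then show ?thesis
    unfolding guild_def by simp
qed

lemma quorum_minus_faulty_kernel:
  assumes "asym_quorum_system FP QS" "Qj \<in> QS j" "F \<in> star (FP i)" "F \<in> star (FP j)"
  shows "Qj - F \<in> kernels QS i"
  using assms unfolding asym_quorum_system_def kernels_def by blast

locale ag_run =
  fixes FP QS :: "'p::finite \<Rightarrow> 'p set set" and F :: "'p set" and ev :: "nat \<Rightarrow> ('p, 'v) event"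
  assumes quorum_system: "asym_quorum_system FP QS"
    and execution: "ag_execution FP QS F ev"
begin

abbreviation \<G> where "\<G> \<equiv> Gmax FP QS F"

abbreviation st where "st \<equiv> lst QS ev"

lemma proposes: "p \<notin> F \<Longrightarrow> \<exists>t x. ev t = Propose p x"
  using execution unfolding ag_execution_def by (elim conjE) meson

lemma reliable_link: "p \<notin> F \<Longrightarrow> q \<notin> F \<Longrightarrow> sends QS ev p q m t \<Longrightarrow> \<exists>t'. ev t' = Receive q p m"
  using execution unfolding ag_execution_def by (elim conjE) meson

lemma authentic_link: "p \<notin> F \<Longrightarrow> q \<notin> F \<Longrightarrow> ev t = Receive q p m \<Longrightarrow> \<exists>t'. sends QS ev p q m t'"
  using execution unfolding ag_execution_def by (elim conjE) meson

lemma fairness: "p \<notin> F \<Longrightarrow> enabled QS p a (st p t) \<Longrightarrow> \<exists>t'\<ge>t. ev t' = Act p a"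
  using execution unfolding ag_execution_def by (elim conjE) meson

lemma arb_validity: "j \<notin> F \<Longrightarrow> ev t = Propose j x \<Longrightarrow> i \<in> \<G> \<Longrightarrow> \<exists>t'. ev t' = ArbDeliver i j x"
  using execution unfolding ag_execution_def by (elim conjE) meson

lemma arb_consistency:
  "i \<in> \<G> \<Longrightarrow> k \<in> \<G> \<Longrightarrow> ev t = ArbDeliver i j x \<Longrightarrow> ev t' = ArbDeliver k j y \<Longrightarrow> x = y"
  using execution unfolding ag_execution_def by (elim conjE) meson

lemma arb_totality: "i \<in> \<G> \<Longrightarrow> ev t = ArbDeliver i j x \<Longrightarrow> k \<in> \<G> \<Longrightarrow> \<exists>t' y. ev t' = ArbDeliver k j y"
  using execution unfolding ag_execution_def by (elim conjE) meson

lemma Gmax_correct: "i \<in> \<G> \<Longrightarrow> i \<notin> F"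
  using guild_Gmax[of FP QS F] unfolding guild_def wise_def by blast

lemma Gmax_wise: "i \<in> \<G> \<Longrightarrow> F \<in> star (FP i)"
  using guild_Gmax[of FP QS F] unfolding guild_def wise_def by blast

lemma Gmax_quorum:
  assumes "i \<in> \<G>"
  obtains Q where "Q \<in> QS i" "Q \<subseteq> \<G>"
  using guild_Gmax[of FP QS F] assms unfolding guild_def by blast

lemma message_received:
  assumes "p \<notin> F" "q \<notin> F" "sends QS ev p q m t"
  shows "\<exists>t'. st q (Suc t') = recv_upd p m (st q t')"
proof -
  obtain t' where "ev t' = Receive q p m"
    using reliable_link[OF assms] by blast
  then show ?thesis by (intro exI[of _ t']) simp
qed

lemma eventually_received_from_all:
  assumes "i \<notin> F" "K \<inter> F = {}" "\<forall>k\<in>K. \<exists>t. sends QS ev k i (m k) t"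
    and "mono (\<lambda>t. f (st i t))" "\<And>k s. k \<in> f (recv_upd k (m k) s)"
  shows "\<exists>t. K \<subseteq> f (st i t)"
proof (rule mono_eventually_subset[OF assms(4) finite, rule_format])
  fix k assume "k \<in> K"
  then obtain t where "st i (Suc t) = recv_upd k (m k) (st i t)"
    using assms(1-3) message_received by blast
  then show "\<exists>t. k \<in> f (st i t)"
    using assms(5) by metis
qed

lemma guard_executed:
  assumes "p \<notin> F" "g \<in> fired (st p t) \<or> enabled QS p (Guard g) (st p t)"
  shows "\<exists>t'. executes QS ev p (Guard g) t'"
proof (cases "g \<in> fired (st p t)")
  case True
  then show ?thesis using fired_lst_executed[OF True] by blast
next
  case False
  with assms have enabled: "enabled QS p (Guard g) (st p t)" by blast
  then obtain t' where "t \<le> t'" "ev t' = Act p (Guard g)"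
    using fairness assms(1) by blast
  then show ?thesis
    using enabled_Guard_persists[OF enabled] fired_lst_executed by (metis executes_def)
qed

lemma G3_executed:
  assumes "i \<in> \<G>"
  shows "\<exists>t. executes QS ev i (Guard G3) t"
proof -
  obtain Q where Q: "Q \<in> QS i" "Q \<subseteq> \<G>"
    using Gmax_quorum[OF assms] .
  have delivered: "\<forall>j\<in>Q. \<exists>t. j \<in> Domain (agS (st i t))"
  proof
    fix j assume "j \<in> Q"
    then have "j \<notin> F" using Q(2) Gmax_correct by blast
    then obtain tp x where "ev tp = Propose j x"
      using proposes by blast
    then obtain t where "ev t = ArbDeliver i j x"
      using arb_validity \<open>j \<notin> F\<close> assms by blast
    then have "(j, x) \<in> agS (st i (Suc t))" by simp
    then show "\<exists>t. j \<in> Domain (agS (st i t))" by blast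
  qed
  have "mono (\<lambda>t. Domain (agS (st i t)))"
  proof (rule monoI)
    fix t t' :: nat assume "t \<le> t'"
    then show "Domain (agS (st i t)) \<subseteq> Domain (agS (st i t'))"
      using mono_lst(1)[of QS ev i, THEN monoD] by (simp add: Domain_mono)
  qed
  then obtain t where "Q \<subseteq> Domain (agS (st i t))"
    using mono_eventually_subset[OF _ finite delivered] by blast
  then have "G3 \<in> fired (st i t) \<or> enabled QS i (Guard G3) (st i t)"
    using Q(1) by (simp add: subset_iff Domain_iff) blast
  then show ?thesis
    using guard_executed Gmax_correct[OF assms] by blast
qed

lemma agS_spreads:
  assumes "i \<in> \<G>" "k \<in> \<G>" "(j, x) \<in> agS (st i t)"
  shows "\<exists>t'. (j, x) \<in> agS (st k t')"
proof -
  obtain t0 where at_i: "ev t0 = ArbDeliver i j x"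
    using agS_lst_delivered[OF assms(3)] by blast
  then obtain t' y where at_k: "ev t' = ArbDeliver k j y"
    using arb_totality[OF assms(1) _ assms(2)] by blast
  then have "(j, y) \<in> agS (st k (Suc t'))" by simp
  moreover have "x = y"
    using arb_consistency[OF assms(1,2) at_i at_k] .
  ultimately show ?thesis by blast
qed

lemma HandleS_executed:
  assumes "k \<notin> F" "(j, X) \<in> set (pendS (st k a))" "X \<subseteq> agS (st k b)"
  shows "\<exists>t. executes QS ev k (HandleS j X) t"
proof (cases "\<exists>t\<ge>a. (j, X) \<notin> set (pendS (st k t))")
  case True
  then obtain t where "a \<le> t" "(j, X) \<notin> set (pendS (st k t))" by blast
  then show ?thesis using pendS_lst_removed[OF assms(2)] by blast
next
  case False
  have enabled: "enabled QS k (HandleS j X) (st k t)" if "max a b \<le> t" for t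
  proof -
    have "(j, X) \<in> set (pendS (st k t))" using False that by simp
    moreover have "X \<subseteq> agS (st k t)"
      using order_trans[OF assms(3) monoD[OF mono_lst(1)[of QS ev k]]] that by simp
    ultimately show ?thesis by simp
  qed
  then obtain t where "max a b \<le> t" "ev t = Act k (HandleS j X)"
    using fairness[OF assms(1) enabled[OF order_refl]] by blast
  with enabled show ?thesis
    unfolding executes_def by blast
qed

lemma DistributeS_handled:
  assumes "i \<in> \<G>" "k \<in> \<G>" "executes QS ev i (Guard G3) t"
  shows "\<exists>t'. executes QS ev k (HandleS i (agS (st i t))) t'"
proof -
  let ?S = "agS (st i t)"
  have "sends QS ev i k (DistributeS i ?S) t"
    by (rule executes_sends[OF assms(3)]) simp
  then obtain t1 where "st k (Suc t1) = recv_upd i (DistributeS i ?S) (st k t1)"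
    using message_received[OF Gmax_correct[OF assms(1)] Gmax_correct[OF assms(2)]] by blast
  then have pending: "(i, ?S) \<in> set (pendS (st k (Suc t1)))" by simp
  have "\<forall>y\<in>?S. \<exists>t'. y \<in> agS (st k t')"
    using agS_spreads[OF assms(1,2)] by auto
  then obtain t2 where "?S \<subseteq> agS (st k t2)"
    using mono_eventually_subset[OF mono_lst(1) finite_agS_lst] by meson
  then show ?thesis
    using HandleS_executed[OF Gmax_correct[OF assms(2)] pending] by blast
qed

context
  assumes no_sentT: "\<forall>j\<in>\<G>. \<forall>t. \<not> sentT (st j t)"
begin

lemma Ack_sent:
  assumes "i \<in> \<G>" "k \<in> \<G>"
  shows "\<exists>t. sends QS ev k i (Ack k) t"
proof -
  obtain t where "executes QS ev i (Guard G3) t"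
    using G3_executed[OF assms(1)] by blast
  then obtain t' where handled: "executes QS ev k (HandleS i (agS (st i t))) t'"
    using DistributeS_handled[OF assms] by blast
  have "(i, Ack k) \<in> outputs k (HandleS i (agS (st i t))) (st k t')"
    using no_sentT assms(2) by simp
  then show ?thesis
    using executes_sends[OF handled] by blast
qed

lemma Ready_sent:
  assumes "i \<in> \<G>"
  shows "\<exists>t. sends QS ev i q Ready t"
proof -
  obtain Q where Q: "Q \<in> QS i" "Q \<subseteq> \<G>"
    using Gmax_quorum[OF assms] .
  have "\<exists>t. Q \<subseteq> ackfrom (st i t)"
  proof (rule eventually_received_from_all[where m = Ack])
    show "\<forall>k\<in>Q. \<exists>t. sends QS ev k i (Ack k) t"
      using Ack_sent assms Q(2) by blast
  qed (use Gmax_correct assms Q(2) mono_lst(2) in auto)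
  then obtain t where "G5 \<in> fired (st i t) \<or> enabled QS i (Guard G5) (st i t)"
    using Q(1) by auto
  then obtain t' where "executes QS ev i (Guard G5) t'"
    using guard_executed Gmax_correct[OF assms] by blast
  then show ?thesis
    using executes_sends by fastforce
qed

lemma Confirm_sent_if_no_sentT:
  assumes "i \<in> \<G>"
  shows "\<exists>t. sends QS ev i q Confirm t"
proof -
  obtain Q where Q: "Q \<in> QS i" "Q \<subseteq> \<G>"
    using Gmax_quorum[OF assms] .
  have "\<exists>t. Q \<subseteq> readyfrom (st i t)"
  proof (rule eventually_received_from_all[where m = "\<lambda>_. Ready"])
    show "\<forall>k\<in>Q. \<exists>t. sends QS ev k i Ready t"
      using Ready_sent Q(2) by blast
  qed (use Gmax_correct assms Q(2) mono_lst(3) in auto)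
  then obtain t where "G6 \<in> fired (st i t) \<or> enabled QS i (Guard G6) (st i t)"
    using Q(1) by auto
  then obtain t' where "executes QS ev i (Guard G6) t'"
    using guard_executed Gmax_correct[OF assms] by blast
  then show ?thesis
    using executes_sends by fastforce
qed

end

lemma Confirm_sent_after_G8:
  assumes "j \<in> \<G>" "executes QS ev j (Guard G8) t" "i \<in> \<G>"
  shows "\<exists>t. sends QS ev i q Confirm t"
proof -
  obtain Qj where Qj: "Qj \<in> QS j" "Qj \<subseteq> confirmfrom (st j t)"
    using assms(2) unfolding executes_def by auto
  have kernel: "Qj - F \<in> kernels QS i"
    by (rule quorum_minus_faulty_kernel[OF quorum_system Qj(1) Gmax_wise[OF assms(3)] Gmax_wise[OF assms(1)]])
  have "\<exists>t. Qj - F \<subseteq> confirmfrom (st i t)"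
  proof (rule eventually_received_from_all[where m = "\<lambda>_. Confirm"])
    show "\<forall>k\<in>Qj - F. \<exists>t. sends QS ev k i Confirm t"
    proof
      fix k assume k: "k \<in> Qj - F"
      then have "k \<in> confirmfrom (st j t)"
        using Qj(2) by blast
      then obtain t0 where "ev t0 = Receive j k Confirm"
        by (blast dest: confirmfrom_lst_received)
      then obtain t1 where "sends QS ev k j Confirm t1"
        using authentic_link[OF _ Gmax_correct[OF assms(1)]] k by blast
      then show "\<exists>t. sends QS ev k i Confirm t"
        by (blast intro: Confirm_sent_to_all)
    qed
  qed (use Gmax_correct assms(3) mono_lst(4) in auto)
  then obtain t' where "G7 \<in> fired (st i t') \<or> enabled QS i (Guard G7) (st i t')"
    using kernel by auto
  then obtain t'' where "executes QS ev i (Guard G7) t''"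
    using guard_executed Gmax_correct[OF assms(3)] by blast
  then show ?thesis
    using executes_sends by fastforce
qed

lemma Confirm_sent:
  assumes "i \<in> \<G>"
  shows "\<exists>t. sends QS ev i q Confirm t"
proof (cases "\<exists>j\<in>\<G>. \<exists>t. sentT (st j t)")
  case True
  then obtain j t where "j \<in> \<G>" "executes QS ev j (Guard G8) t"
    by (blast dest: sentT_lst_executed_G8)
  then show ?thesis
    using Confirm_sent_after_G8 assms by blast
next
  case False
  then show ?thesis
    using Confirm_sent_if_no_sentT assms by blast
qed

lemma DistributeT_sent:
  assumes "i \<in> \<G>"
  shows "\<exists>t q j X. sends QS ev i q (DistributeT j X) t"
proof -
  obtain Q where Q: "Q \<in> QS i" "Q \<subseteq> \<G>"
    using Gmax_quorum[OF assms] .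
  have "\<exists>t. Q \<subseteq> confirmfrom (st i t)"
  proof (rule eventually_received_from_all[where m = "\<lambda>_. Confirm"])
    show "\<forall>k\<in>Q. \<exists>t. sends QS ev k i Confirm t"
      using Confirm_sent Q(2) by blast
  qed (use Gmax_correct assms Q(2) mono_lst(4) in auto)
  then obtain t where "G8 \<in> fired (st i t) \<or> enabled QS i (Guard G8) (st i t)"
    using Q(1) by auto
  then obtain t' where "executes QS ev i (Guard G8) t'"
    using guard_executed Gmax_correct[OF assms] by blast
  then show ?thesis
    using executes_sends by fastforce
qed

end

theorem lemma3p6:
  fixes FP QS :: "'p::finite \<Rightarrow> 'p set set"
    and F :: "'p set"
    and ev :: "nat \<Rightarrow> ('p, 'v) event"
  assumes "asym_quorum_system FP QS"
    and "ag_execution FP QS F ev"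
    and "\<exists>G. G \<noteq> {} \<and> guild FP QS F G"
  shows "\<forall>i\<in>Gmax FP QS F. \<exists>t q j X. sends QS ev i q (DistributeT j X) t"
proof -
  interpret ag_run FP QS F ev
    using assms(1,2) by unfold_locales
  show ?thesis
    using DistributeT_sent by blast
qed

end
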